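(* For $d>0$ let $\lambda_d(\rho)=\int_{\sinh^{-1}d}^{\rho}\frac{d}{\sqrt{\sinh^2x-d^2}}\,dx$ for $\rho\ge\sinh^{-1}d$, let $\hat\rho(d)=\frac{3}{2}\log d$, and let $\hat h(d)=\lambda_d(\hat\rho(d))$ (defined for $d$ large enough that $\hat\rho(d)\ge\sinh^{-1}d$). Then $\lim_{d\to\infty}\hat h(d)=\frac{\pi}{2}$.
   Context: The function $\lambda_d$ is the generating function of the rotationally symmetric minimal catenoid $\mathcal{C}_d=\{(\rho,\theta,\pm\lambda_d(\rho))\}$ in $\mathbb{H}^2\times\mathbb{R}$ (coordinates: geodesic polar coordinates $(\rho,\theta)$ on $\mathbb{H}^2$ and height $z$), so $2\hat h(d)$ is the height of the compact piece $\mathcal{C}_d\cap(\mathbb{H}^2\times[-\hat h(d),\hat h(d)])$. *)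

theory Defs
  imports "HOL-Analysis.Analysis"
begin

text \<open>Generating function of the catenoid: the (improper at the lower endpoint, but
absolutely convergent) integral of d / sqrt(sinh^2 x - d^2) from arsinh d to rho.\<close>
definition lambda_cat :: "real \<Rightarrow> real \<Rightarrow> real" where
  "lambda_cat d \<rho> = integral {arsinh d..\<rho>} (\<lambda>x. d / sqrt ((sinh x)\<^sup>2 - d\<^sup>2))"

definition rho_hat :: "real \<Rightarrow> real" where
  "rho_hat d = 3 / 2 * ln d"

definition h_hat :: "real \<Rightarrow> real" where
  "h_hat d = lambda_cat d (rho_hat d)"

end

theory Submission
  imports Defs "HOL-Real_Asymp.Real_Asymp"
begin

text \<open>Integrate by parts, with the primitive \<open>tanh\<close> of \<open>1 / cosh\<^sup>2\<close> and the primitive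
\<open>U = arccos (d / sinh)\<close> of \<open>d cosh / (sinh sqrt (sinh\<^sup>2 - d\<^sup>2))\<close>, whose product with \<open>tanh\<close>
is the integrand of \<open>\<lambda>\<^sub>d\<close>:
\<open>\<lambda>\<^sub>d(\<rho>) = tanh \<rho> U(\<rho>) - \<integral> U / cosh\<^sup>2\<close>, the integral taken over \<open>[arsinh d, \<rho>]\<close>.
There \<open>0 \<le> U \<le> \<pi>/2\<close> and \<open>cosh\<^sup>2 \<ge> 1 + d\<^sup>2\<close>, so the remainder integral is \<open>O(\<rho> / d\<^sup>2)\<close>,
which vanishes at \<open>\<rho> = 3/2 log d\<close>. At that point \<open>sinh \<rho> / d \<sim> sqrt d / 2 \<rightarrow> \<infinity>\<close>, hence
\<open>U(\<rho>) \<rightarrow> \<pi>/2\<close>, while \<open>tanh \<rho> \<rightarrow> 1\<close>.\<close>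

lemma arsinh_le_iff_le_sinh: "arsinh d \<le> x \<longleftrightarrow> d \<le> sinh (x::real)"
  by (metis sinh_arsinh_real sinh_real_le_iff)

lemma arsinh_less_iff_less_sinh: "arsinh d < x \<longleftrightarrow> d < sinh (x::real)"
  by (metis sinh_arsinh_real sinh_real_less_iff)

text \<open>For \<open>0 < d \<le> sinh x\<close> this is \<open>arccos (d / sinh x)\<close>, the angle function \<open>U\<close>.\<close>
definition catenoid_angle :: "real \<Rightarrow> real \<Rightarrow> real" where
  "catenoid_angle d x = arctan (sqrt ((sinh x)\<^sup>2 / d\<^sup>2 - 1))"

lemma continuous_on_catenoid_angle: "d \<noteq> 0 \<Longrightarrow> continuous_on S (catenoid_angle d)"
  unfolding catenoid_angle_def by (intro continuous_intros) simp

lemma catenoid_angle_nonneg: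
  assumes "0 < d" "d \<le> sinh x"
  shows "0 \<le> catenoid_angle d x"
proof -
  have "d\<^sup>2 \<le> (sinh x)\<^sup>2"
    using assms by (simp add: power_mono)
  then show ?thesis
    using assms(1) by (simp add: catenoid_angle_def field_simps)
qed

lemma catenoid_angle_less_pi_half: "catenoid_angle d x < pi / 2"
  unfolding catenoid_angle_def by (rule arctan_ubound)

lemma catenoid_angle_has_real_derivative:
  assumes d: "0 < d" and x: "d < sinh x"
  shows "(catenoid_angle d has_real_derivative
           d * cosh x / (sinh x * sqrt ((sinh x)\<^sup>2 - d\<^sup>2))) (at x)"
proof -
  define g where "g = (\<lambda>x. (sinh x)\<^sup>2 / d\<^sup>2 - 1)"
  define R where "R = sqrt ((sinh x)\<^sup>2 - d\<^sup>2)"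
  have "d\<^sup>2 < (sinh x)\<^sup>2"
    using d x by (simp add: power_strict_mono)
  then have R: "0 < R" and g: "0 < g x"
    using d by (simp_all add: R_def g_def field_simps)
  have "g x = ((sinh x)\<^sup>2 - d\<^sup>2) / d\<^sup>2"
    using d by (simp add: g_def field_simps)
  then have sqrt_g: "sqrt (g x) = R / d"
    using d by (simp add: R_def real_sqrt_divide)
  have one_plus_g: "1 + (sqrt (g x))\<^sup>2 = (sinh x)\<^sup>2 / d\<^sup>2"
    using g by (simp add: g_def)
  have "(g has_real_derivative 2 * sinh x * cosh x / d\<^sup>2) (at x)"
    unfolding g_def using d by (auto intro!: derivative_eq_intros simp: power2_eq_square)
  from DERIV_chain2[OF DERIV_arctan DERIV_chain2[OF DERIV_real_sqrt[OF g] this]]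
  have "(catenoid_angle d has_real_derivative
          inverse (1 + (sqrt (g x))\<^sup>2) * (inverse (sqrt (g x)) / 2 * (2 * sinh x * cosh x / d\<^sup>2)))
         (at x)"
    by (simp add: catenoid_angle_def[abs_def] g_def)
  also have "inverse (1 + (sqrt (g x))\<^sup>2) * (inverse (sqrt (g x)) / 2 * (2 * sinh x * cosh x / d\<^sup>2))
             = d * cosh x / (sinh x * R)"
    unfolding one_plus_g unfolding sqrt_g using d x R by (simp add: field_simps power2_eq_square)
  finally show ?thesis
    unfolding R_def .
qed

lemma tanh_mult_catenoid_angle_has_real_derivative:
  assumes d: "0 < d" and x: "d < sinh x"
  shows "((\<lambda>x. tanh x * catenoid_angle d x) has_real_derivative
           d / sqrt ((sinh x)\<^sup>2 - d\<^sup>2) + catenoid_angle d x / (cosh x)\<^sup>2) (at x)"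
proof -
  have "(tanh has_real_derivative 1 / (cosh x)\<^sup>2) (at x)"
    unfolding tanh_def[abs_def] using cosh_square_eq[of x]
    by (auto intro!: derivative_eq_intros simp: field_simps power2_eq_square)
  from DERIV_mult[OF this catenoid_angle_has_real_derivative[OF d x]]
  have "((\<lambda>x. tanh x * catenoid_angle d x) has_real_derivative
          1 / (cosh x)\<^sup>2 * catenoid_angle d x
          + d * cosh x / (sinh x * sqrt ((sinh x)\<^sup>2 - d\<^sup>2)) * tanh x) (at x)" .
  also have "1 / (cosh x)\<^sup>2 * catenoid_angle d x
               + d * cosh x / (sinh x * sqrt ((sinh x)\<^sup>2 - d\<^sup>2)) * tanh x
             = d / sqrt ((sinh x)\<^sup>2 - d\<^sup>2) + catenoid_angle d x / (cosh x)\<^sup>2"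
  proof -
    have "sinh x \<noteq> 0"
      using d x by linarith
    then show ?thesis
      by (simp add: tanh_def)
  qed
  finally show ?thesis .
qed

definition catenoid_remainder :: "real \<Rightarrow> real \<Rightarrow> real" where
  "catenoid_remainder d r = integral {arsinh d..r} (\<lambda>y. catenoid_angle d y / (cosh y)\<^sup>2)"

lemma lambda_cat_by_parts:
  assumes d: "0 < d" and r: "arsinh d \<le> r"
  shows "lambda_cat d r = tanh r * catenoid_angle d r - catenoid_remainder d r"
proof -
  define a where "a = arsinh d"
  define h where "h = (\<lambda>y. catenoid_angle d y / (cosh y)\<^sup>2)"
  define P where "P = (\<lambda>x. tanh x * catenoid_angle d x - integral {a..x} h)"
  have h_cont: "continuous_on {a..r} h"
    unfolding h_def using d by (intro continuous_intros continuous_on_catenoid_angle) auto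
  have P_cont: "continuous_on {a..r} P"
    unfolding P_def tanh_def
    using d h_cont by (intro continuous_intros continuous_on_catenoid_angle
        indefinite_integral_continuous_1 integrable_continuous_interval) auto
  have P_deriv: "(P has_vector_derivative d / sqrt ((sinh x)\<^sup>2 - d\<^sup>2)) (at x)"
    if "x \<in> {a<..<r}" for x
  proof -
    have "((\<lambda>u. integral {a..u} h) has_real_derivative h x) (at x within {a..r})"
      using integral_has_real_derivative[OF h_cont] that by auto
    moreover have "at x within {a..r} = at x"
      using that by (intro at_within_interior) auto
    moreover have "d < sinh x"
      using that by (simp add: a_def arsinh_less_iff_less_sinh)
    ultimately show ?thesis
      unfolding P_def has_real_derivative_iff_has_vector_derivative[symmetric]
      using DERIV_diff[OF tanh_mult_catenoid_angle_has_real_derivative[OF d]]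
      by (fastforce simp: h_def)
  qed
  have "((\<lambda>x. d / sqrt ((sinh x)\<^sup>2 - d\<^sup>2)) has_integral P r - P a) {a..r}"
    using fundamental_theorem_of_calculus_interior[OF _ P_cont P_deriv] r by (simp add: a_def)
  moreover have "P a = 0"
    using d by (simp add: P_def a_def catenoid_angle_def)
  ultimately show ?thesis
    by (simp add: lambda_cat_def catenoid_remainder_def integral_unique P_def a_def h_def)
qed

lemma catenoid_remainder_bounds:
  assumes d: "0 < d" and r: "arsinh d \<le> r"
  shows "0 \<le> catenoid_remainder d r"
    and "catenoid_remainder d r \<le> (r - arsinh d) * (pi / 2 / (1 + d\<^sup>2))"
proof -
  have integrable: "(\<lambda>y. catenoid_angle d y / (cosh y)\<^sup>2) integrable_on {arsinh d..r}"
    using d by (intro integrable_continuous_interval continuous_intros continuous_on_catenoid_angle) auto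
  have bounds: "0 \<le> catenoid_angle d y / (cosh y)\<^sup>2"
    "catenoid_angle d y / (cosh y)\<^sup>2 \<le> pi / 2 / (1 + d\<^sup>2)"
    if "y \<in> {arsinh d..r}" for y
  proof -
    have "d \<le> sinh y"
      using that by (simp add: arsinh_le_iff_le_sinh)
    then have U: "0 \<le> catenoid_angle d y" and cosh: "1 + d\<^sup>2 \<le> (cosh y)\<^sup>2"
      using d by (simp_all add: catenoid_angle_nonneg cosh_square_eq power_mono)
    then show "0 \<le> catenoid_angle d y / (cosh y)\<^sup>2"
      by simp
    show "catenoid_angle d y / (cosh y)\<^sup>2 \<le> pi / 2 / (1 + d\<^sup>2)"
      using U cosh catenoid_angle_less_pi_half[of d y]
      by (intro frac_le) (auto intro: add_pos_nonneg)
  qed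
  show "0 \<le> catenoid_remainder d r"
    unfolding catenoid_remainder_def using bounds(1) by (intro integral_nonneg[OF integrable]) auto
  have "catenoid_remainder d r \<le> integral {arsinh d..r} (\<lambda>_. pi / 2 / (1 + d\<^sup>2))"
    unfolding catenoid_remainder_def using bounds(2) by (intro integral_le[OF integrable]) auto
  then show "catenoid_remainder d r \<le> (r - arsinh d) * (pi / 2 / (1 + d\<^sup>2))"
    using r by simp
qed

theorem lemma7p2:
  shows "(h_hat \<longlongrightarrow> pi / 2) at_top"
proof -
  define Q where "Q = (\<lambda>d. catenoid_remainder d (rho_hat d))"
  have "\<forall>\<^sub>F d in at_top. arsinh d \<le> rho_hat d"
    unfolding rho_hat_def by real_asymp
  then have domain: "\<forall>\<^sub>F d in at_top. 0 < d \<and> arsinh d \<le> rho_hat d"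
    by (intro eventually_conj eventually_gt_at_top)
  then have h_hat_eq: "\<forall>\<^sub>F d in at_top. tanh (rho_hat d) * catenoid_angle d (rho_hat d) - Q d = h_hat d"
    by eventually_elim (simp add: h_hat_def Q_def lambda_cat_by_parts)
  have "filterlim rho_hat at_top at_top"
    unfolding rho_hat_def by real_asymp
  then have tanh_lim: "((\<lambda>d. tanh (rho_hat d)) \<longlongrightarrow> 1) at_top"
    by (rule filterlim_compose[OF tanh_real_at_top])
  have "filterlim (\<lambda>d. sqrt ((sinh (rho_hat d))\<^sup>2 / d\<^sup>2 - 1)) at_top at_top"
    unfolding rho_hat_def by real_asymp
  then have angle_lim: "((\<lambda>d. catenoid_angle d (rho_hat d)) \<longlongrightarrow> pi / 2) at_top"
    unfolding catenoid_angle_def by (rule filterlim_compose[OF tendsto_arctan_at_top])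
  have "\<forall>\<^sub>F d in at_top. 0 \<le> Q d"
    using domain by eventually_elim (simp only: Q_def catenoid_remainder_bounds)
  moreover have "\<forall>\<^sub>F d in at_top. Q d \<le> (rho_hat d - arsinh d) * (pi / 2 / (1 + d\<^sup>2))"
    using domain by eventually_elim (simp only: Q_def catenoid_remainder_bounds)
  moreover have "((\<lambda>d. (rho_hat d - arsinh d) * (pi / 2 / (1 + d\<^sup>2))) \<longlongrightarrow> 0) at_top"
    unfolding rho_hat_def by real_asymp
  ultimately have Q_lim: "(Q \<longlongrightarrow> 0) at_top"
    by (rule tendsto_sandwich[OF _ _ tendsto_const])
  have "((\<lambda>d. tanh (rho_hat d) * catenoid_angle d (rho_hat d) - Q d) \<longlongrightarrow> 1 * (pi / 2) - 0) at_top"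
    by (intro tendsto_intros tanh_lim angle_lim Q_lim)
  then show ?thesis
    using Lim_transform_eventually[OF _ h_hat_eq] by simp
qed

end
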